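(* Let $i,j,k$ be integers with $j>0$ and $0\le k<i$, and suppose $(i,j,k)$ is a virtual knot (one component). Then \[ \mathrm{vu}((i,j,k))\le \frac{(i-1)(j-1)+k}{2}. \]
   Context: Braid conventions: braids on $i$ strands are drawn horizontally, oriented left to right, with positions $1,\dots,i$ numbered from top to bottom, and words are read left to right. The generator $\sigma_m$ is a classical (positive) crossing at which the strand in position $m$ moves to position $m+1$, passing over the strand moving from position $m+1$ to position $m$. Virtual crossings carry no over/under information. $VB^1_{i,j}$ is obtained from $(\sigma_1\cdots\sigma_{i-1})^j$ by replacing the crossings of the first (left-most) block $\sigma_1\cdots\sigma_{i-1}$ by virtual crossings. $B_k=\sigma_k\cdots\sigma_1$, with $B_0$ trivial. $(i,j,k)$ is the closure of $VB^1_{i,j}B_k$. Virtual knots are considered up to generalized Reidemeister moves: classical R1–R3, virtual VR1–VR3 and mixed MR. A crossing change switches a classical crossing. A virtual knot is virtually null-homotopic if it can be turned into the unknot by these moves and crossing changes. For such a knot $K$, $\mathrm{vu}(K)$ is the minimal number of crossing changes needed to do so. *)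

theory Defs
  imports Main
begin

text \<open>A (one-component) virtual knot diagram is encoded by its signed Gauss code:
  the cyclic word of crossings met while travelling once along the knot.  An entry
  (c, ov, s) records the crossing label c, whether the strand passes over (ov = True)
  or under (ov = False) at this passage, and the sign of the crossing (s = True means
  positive).  Virtual crossings are not recorded; virtual and mixed moves
  (VR1-VR3, MR) do not change the Gauss code, so generalized Reidemeister
  equivalence of virtual knots is the equivalence of Gauss codes generated by
  cyclic rotation and the Gauss-code versions of R1, R2, R3.\<close>

type_synonym entry = "nat \<times> bool \<times> bool"
type_synonym gcode = "entry list"

definition labels :: "gcode \<Rightarrow> nat set" where
  "labels w = fst ` set w"

definition sg :: "bool \<Rightarrow> int" where
  "sg b = (if b then 1 else -1)"

text \<open>R3: three strands T (top), M (middle), B (bottom) pairwise crossing at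
  a = T over M, b = T over B, c = M over B.  Booleans s1, s2, s3 give the order of
  the two crossings along T (a before b), M (a before c), B (b before c).
  Geometric realizability of the triangle (with orientation rho) forces the sign
  relations below.\<close>

definition r3_segments :: "gcode \<Rightarrow> gcode \<Rightarrow> gcode \<Rightarrow> bool" where
  "r3_segments S1 S2 S3 \<longleftrightarrow>
    (\<exists>a b c ea eb ec s1 s2 s3 rho.
       distinct [a, b, c] \<and>
       sg ea = sg rho * sg s1 * sg s2 \<and>
       sg eb = sg rho * sg s1 * sg s3 \<and>
       sg ec = sg rho * sg s2 * sg s3 \<and>
       (let T = (if s1 then [(a, True, ea), (b, True, eb)] else [(b, True, eb), (a, True, ea)]);
            M = (if s2 then [(a, False, ea), (c, True, ec)] else [(c, True, ec), (a, False, ea)]);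
            B = (if s3 then [(b, False, eb), (c, False, ec)] else [(c, False, ec), (b, False, eb)])
        in (S1, S2, S3) \<in> {(T, M, B), (T, B, M), (M, T, B), (M, B, T), (B, T, M), (B, M, T)}))"

inductive vmove :: "gcode \<Rightarrow> gcode \<Rightarrow> bool" where
  rotate: "vmove w (rotate1 w)"
| R1: "c \<notin> labels (u @ v) \<Longrightarrow>
       vmove (u @ v) (u @ [(c, ov, e), (c, \<not> ov, e)] @ v)"
| R2: "a \<noteq> b \<Longrightarrow> a \<notin> labels (u @ v @ x) \<Longrightarrow> b \<notin> labels (u @ v @ x) \<Longrightarrow>
       P = [(a, ov, e), (b, ov, \<not> e)] \<Longrightarrow>
       Q = [(a, \<not> ov, e), (b, \<not> ov, \<not> e)] \<or> Q = [(b, \<not> ov, \<not> e), (a, \<not> ov, e)] \<Longrightarrow>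
       vmove (u @ v @ x) (u @ P @ v @ Q @ x)"
| R3: "r3_segments S1 S2 S3 \<Longrightarrow>
       vmove (p1 @ S1 @ p2 @ S2 @ p3 @ S3 @ p4)
             (p1 @ rev S1 @ p2 @ rev S2 @ p3 @ rev S3 @ p4)"

definition vequiv :: "gcode \<Rightarrow> gcode \<Rightarrow> bool" where
  "vequiv = (sup vmove (conversep vmove))\<^sup>*\<^sup>*"

definition crossing_change :: "nat \<Rightarrow> gcode \<Rightarrow> gcode" where
  "crossing_change c w = map (\<lambda>(d, ov, s). if d = c then (d, \<not> ov, \<not> s) else (d, ov, s)) w"

inductive unknot_with :: "gcode \<Rightarrow> nat \<Rightarrow> bool" where
  base: "unknot_with [] 0"
| move: "vequiv w w' \<Longrightarrow> unknot_with w' n \<Longrightarrow> unknot_with w n"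
| cc: "c \<in> labels w \<Longrightarrow> unknot_with (crossing_change c w) n \<Longrightarrow> unknot_with w (Suc n)"

definition null_homotopic :: "gcode \<Rightarrow> bool" where
  "null_homotopic w \<longleftrightarrow> (\<exists>n. unknot_with w n)"

definition vu :: "gcode \<Rightarrow> nat" where
  "vu w = (LEAST n. unknot_with w n)"

datatype letter = Virt nat | Cl nat

definition sw :: "nat \<Rightarrow> nat \<Rightarrow> nat" where
  "sw m p = (if p = m then m + 1 else if p = m + 1 then m else p)"

text \<open>Passing a strand at position p through a letter with index n (its crossing
  label).  At sigma_m the strand from position m passes over (to m+1), the strand
  from m+1 passes under; the crossing is positive.\<close>
fun step :: "nat \<Rightarrow> letter \<Rightarrow> nat \<Rightarrow> gcode \<times> nat" where
  "step n (Virt m) p = ([], sw m p)"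
| "step n (Cl m) p =
     ((if p = m then [(n, True, True)] else if p = m + 1 then [(n, False, True)] else []), sw m p)"

fun trav :: "nat \<Rightarrow> letter list \<Rightarrow> nat \<Rightarrow> gcode \<times> nat" where
  "trav n [] p = ([], p)"
| "trav n (l # ls) p =
     (let (e, p') = step n l p; (es, q) = trav (Suc n) ls p' in (e @ es, q))"

definition bperm :: "letter list \<Rightarrow> nat \<Rightarrow> nat" where
  "bperm w p = snd (trav 0 w p)"

definition closure_is_knot :: "nat \<Rightarrow> letter list \<Rightarrow> bool" where
  "closure_is_knot i w \<longleftrightarrow> (\<forall>p \<in> {1..i}. \<exists>t. (bperm w ^^ t) 1 = p)"

definition closure_code :: "nat \<Rightarrow> letter list \<Rightarrow> gcode" where
  "closure_code i w = concat (map (\<lambda>t. fst (trav 0 w ((bperm w ^^ t) 1))) [0..<i])"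

definition VB1 :: "nat \<Rightarrow> nat \<Rightarrow> letter list" where
  "VB1 i j = map Virt [1..<i] @ concat (replicate (j - 1) (map Cl [1..<i]))"

definition Bk :: "nat \<Rightarrow> letter list" where
  "Bk k = map Cl (rev [1..<k + 1])"

definition ijk_braid :: "nat \<Rightarrow> nat \<Rightarrow> nat \<Rightarrow> letter list" where
  "ijk_braid i j k = VB1 i j @ Bk k"

end

(*
  The braid of (i, j, k) is the virtual cycle sigma_1 ... sigma_(i-1), all of whose crossings are
  virtual, followed by a word W of (i - 1) (j - 1) + k classical letters; the Gauss code of its
  closure depends only on i and W.

  Call a Gauss code descending if every crossing is first met as an overpass, or if every crossing
  is first met as an underpass.  A descending closure is trivial: the strand traversed first passes
  over (resp. under) everything it meets, so commutations, R2 and R3 moves on W, which keep the code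
  descending, gather all its crossings into a staircase sigma_(i-1) ... sigma_p at the end of W.
  Conjugating the staircase through the virtual cycle frees one strand, and induction on i applies.

  Changing the crossings first met as underpasses makes the code descending, and so does changing
  all the other crossings.  The two sets partition the crossings, so one of them contains at most
  half of them.
*)

theory Submission
  imports Defs
begin

(* (l, m, e) is the letter sigma_m (e = True) or its inverse (e = False), with crossing label l. *)
type_synonym cletter = "nat \<times> nat \<times> bool"

abbreviation idx :: "cletter \<Rightarrow> nat" where
  "idx x \<equiv> fst (snd x)"

abbreviation is_over :: "entry \<Rightarrow> bool" where
  "is_over e \<equiv> fst (snd e)"

fun passage :: "cletter \<Rightarrow> nat \<Rightarrow> gcode" where
  "passage (l, m, e) p = (if p = m then [(l, e, e)] else if p = Suc m then [(l, \<not> e, e)] else [])"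

fun exit_pos :: "cletter list \<Rightarrow> nat \<Rightarrow> nat" where
  "exit_pos [] p = p"
| "exit_pos (x # W) p = exit_pos W (sw (idx x) p)"

fun strand_code :: "cletter list \<Rightarrow> nat \<Rightarrow> gcode" where
  "strand_code [] p = []"
| "strand_code (x # W) p = passage x p @ strand_code W (sw (idx x) p)"

definition vcycle :: "nat \<Rightarrow> nat \<Rightarrow> nat" where
  "vcycle i p = (if p = 1 then i else p - 1)"

definition return_map :: "nat \<Rightarrow> cletter list \<Rightarrow> nat \<Rightarrow> nat" where
  "return_map i W q = vcycle i (exit_pos W q)"

definition strand_orbit :: "nat \<Rightarrow> cletter list \<Rightarrow> nat list" where
  "strand_orbit i W = map (\<lambda>t. (return_map i W ^^ t) i) [0..<i]"

(* The Gauss code of the closure of (sigma_1 ... sigma_(i-1), all virtual) W, starting with the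
  strand that enters W at position i = vcycle i 1. *)
definition vclosure_code :: "nat \<Rightarrow> cletter list \<Rightarrow> gcode" where
  "vclosure_code i W = concat (map (strand_code W) (strand_orbit i W))"

definition vclosure_is_knot :: "nat \<Rightarrow> cletter list \<Rightarrow> bool" where
  "vclosure_is_knot i W \<longleftrightarrow> distinct (strand_orbit i W) \<and> (return_map i W ^^ i) i = i"

definition on_strands :: "nat \<Rightarrow> cletter list \<Rightarrow> bool" where
  "on_strands i W \<longleftrightarrow> (\<forall>x\<in>set W. 1 \<le> idx x \<and> idx x < i)"

definition knot_word :: "nat \<Rightarrow> cletter list \<Rightarrow> bool" where
  "knot_word i W \<longleftrightarrow> on_strands i W \<and> distinct (map fst W) \<and> vclosure_is_knot i W"

lemma sw_sw [simp]: "sw m (sw m p) = p"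
  by (simp add: sw_def)

lemma sw_eq_iff: "sw m p = sw m q \<longleftrightarrow> p = q"
  by (metis sw_sw)

lemma sw_in_range: "1 \<le> m \<Longrightarrow> m < i \<Longrightarrow> p \<in> {1..i} \<Longrightarrow> sw m p \<in> {1..i}"
  by (auto simp: sw_def)

lemma exit_pos_append [simp]: "exit_pos (U @ V) p = exit_pos V (exit_pos U p)"
  by (induction U arbitrary: p) auto

lemma strand_code_append [simp]: "strand_code (U @ V) p = strand_code U p @ strand_code V (exit_pos U p)"
  by (induction U arbitrary: p) auto

lemma exit_pos_rev: "exit_pos (rev U) (exit_pos U p) = p"
  by (induction U arbitrary: p) auto

lemma exit_pos_rev': "exit_pos U (exit_pos (rev U) p) = p"
  using exit_pos_rev[of "rev U" p] by simp

lemma exit_pos_eq_iff: "exit_pos U p = exit_pos U q \<longleftrightarrow> p = q"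
  by (metis exit_pos_rev)

lemma on_strands_Nil [simp]: "on_strands i []"
  by (simp add: on_strands_def)

lemma on_strands_Cons [simp]: "on_strands i (x # W) \<longleftrightarrow> 1 \<le> idx x \<and> idx x < i \<and> on_strands i W"
  by (auto simp: on_strands_def)

lemma on_strands_append [simp]: "on_strands i (U @ V) \<longleftrightarrow> on_strands i U \<and> on_strands i V"
  by (auto simp: on_strands_def)

lemma on_strands_rev [simp]: "on_strands i (rev W) \<longleftrightarrow> on_strands i W"
  by (simp add: on_strands_def)

lemma on_strands_mono: "on_strands i W \<Longrightarrow> i \<le> n \<Longrightarrow> on_strands n W"
  by (auto simp: on_strands_def)

lemma exit_pos_in_range: "on_strands i W \<Longrightarrow> p \<in> {1..i} \<Longrightarrow> exit_pos W p \<in> {1..i}"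
proof (induction W arbitrary: p)
  case (Cons x W)
  then show ?case using sw_in_range[of "idx x" i p] by simp
qed simp

lemma exit_pos_above: "on_strands n W \<Longrightarrow> n < p \<Longrightarrow> exit_pos W p = p"
  by (induction W) (auto simp: sw_def)

lemma strand_code_above: "on_strands n W \<Longrightarrow> n < p \<Longrightarrow> strand_code W p = []"
proof (induction W)
  case (Cons x W)
  then show ?case by (cases x) (auto simp: sw_def)
qed simp

lemma vcycle_in_range: "p \<in> {1..i} \<Longrightarrow> vcycle i p \<in> {1..i}"
  by (auto simp: vcycle_def)

lemma vcycle_eq_iff: "p \<in> {1..i} \<Longrightarrow> q \<in> {1..i} \<Longrightarrow> vcycle i p = vcycle i q \<longleftrightarrow> p = q"
  by (auto simp: vcycle_def)

lemma return_map_in_range: "on_strands i W \<Longrightarrow> p \<in> {1..i} \<Longrightarrow> return_map i W p \<in> {1..i}"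
  unfolding return_map_def by (intro vcycle_in_range exit_pos_in_range)

lemma return_map_funpow_in_range:
  assumes "on_strands i W" "1 \<le> i"
  shows "(return_map i W ^^ t) i \<in> {1..i}"
proof (induction t)
  case (Suc t)
  then show ?case using return_map_in_range[OF assms(1) Suc.IH] by simp
qed (use assms(2) in simp)

lemma set_strand_orbit:
  assumes "on_strands i W" "vclosure_is_knot i W"
  shows "set (strand_orbit i W) = {1..i}"
proof -
  have "set (strand_orbit i W) \<subseteq> {1..i}"
    using return_map_funpow_in_range[OF assms(1)] by (auto simp: strand_orbit_def)
  moreover have "card (set (strand_orbit i W)) = i"
    using assms(2) distinct_card by (fastforce simp: vclosure_is_knot_def strand_orbit_def)
  ultimately show ?thesis by (simp add: card_subset_eq)
qed

lemma return_map_cong: "exit_pos W = exit_pos W' \<Longrightarrow> return_map i W = return_map i W'"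
  by (rule ext) (simp add: return_map_def)

lemma strand_orbit_cong: "exit_pos W = exit_pos W' \<Longrightarrow> strand_orbit i W = strand_orbit i W'"
  using return_map_cong[of W W' i] by (simp add: strand_orbit_def)

lemma vclosure_is_knot_cong: "exit_pos W = exit_pos W' \<Longrightarrow> vclosure_is_knot i W = vclosure_is_knot i W'"
  using strand_orbit_cong[of W W' i] return_map_cong[of W W' i] by (simp add: vclosure_is_knot_def)

lemma labels_passage: "fst ` set (passage x p) \<subseteq> {fst x}"
  by (cases x) auto

lemma labels_strand_code: "fst ` set (strand_code W p) \<subseteq> fst ` set W"
proof (induction W arbitrary: p)
  case (Cons x W)
  then show ?case using labels_passage[of x p] by auto
qed simp

lemma labels_vclosure_code: "labels (vclosure_code i W) \<subseteq> fst ` set W"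
proof
  fix c assume "c \<in> labels (vclosure_code i W)"
  then obtain q where "c \<in> fst ` set (strand_code W q)" by (auto simp: labels_def vclosure_code_def)
  then show "c \<in> fst ` set W" using labels_strand_code by blast
qed

lemma distinct_labels_strand_code: "distinct (map fst W) \<Longrightarrow> distinct (map fst (strand_code W p))"
proof (induction W arbitrary: p)
  case (Cons x W)
  obtain l m e where x: "x = (l, m, e)" by (cases x)
  have "l \<notin> fst ` set W" using Cons.prems x by simp
  then have "l \<notin> fst ` set (strand_code W (sw m p))" using labels_strand_code[of W "sw m p"] by (meson subsetD)
  then have "fst ` set (passage x p) \<inter> fst ` set (strand_code W (sw m p)) = {}"
    using labels_passage[of x p] x by auto
  moreover have "distinct (map fst (passage x p))" using x by simp
  ultimately show ?case using Cons x by simp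
qed simp

lemma vequiv_refl [simp]: "vequiv w w"
  by (simp add: vequiv_def)

lemma vequiv_trans: "vequiv u v \<Longrightarrow> vequiv v w \<Longrightarrow> vequiv u w"
  unfolding vequiv_def by (rule rtranclp_trans)

lemma vequiv_vmove: "vmove u v \<Longrightarrow> vequiv u v"
  unfolding vequiv_def by (rule r_into_rtranclp) simp

lemma vequiv_vmove_rev: "vmove v u \<Longrightarrow> vequiv u v"
  unfolding vequiv_def by (rule r_into_rtranclp) simp

lemma split_list_two:
  assumes "a \<in> set qs" "b \<in> set qs" "a \<noteq> b"
  obtains x y xs1 xs2 xs3 where "{x, y} = {a, b}" "qs = xs1 @ x # xs2 @ y # xs3"
proof -
  obtain xs ys where qs: "qs = xs @ a # ys" using split_list[OF assms(1)] by blast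
  show ?thesis
  proof (cases "b \<in> set xs")
    case True
    then obtain xs1 xs2 where "xs = xs1 @ b # xs2" using split_list by metis
    then show ?thesis using that[of b a xs1 xs2 ys] qs by auto
  next
    case False
    then have "b \<in> set ys" using assms qs by auto
    then obtain ys1 ys2 where "ys = ys1 @ b # ys2" using split_list by metis
    then show ?thesis using that[of a b xs ys1 ys2] qs by auto
  qed
qed

lemma split_list_three:
  assumes "a \<in> set qs" "b \<in> set qs" "c \<in> set qs" "distinct [a, b, c]"
  obtains x y z xs1 xs2 xs3 xs4
  where "{x, y, z} = {a, b, c}" "qs = xs1 @ x # xs2 @ y # xs3 @ z # xs4"
proof -
  have "a \<noteq> b" using assms(4) by simp
  then obtain x y xs1 xs2 xs3 where xy: "{x, y} = {a, b}" and qs: "qs = xs1 @ x # xs2 @ y # xs3"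
    using split_list_two[OF assms(1,2)] by blast
  have "c \<noteq> x" "c \<noteq> y" using xy assms(4) by auto
  then consider "c \<in> set xs1" | "c \<in> set xs2" | "c \<in> set xs3" using assms(3) qs by auto
  then show ?thesis
  proof cases
    case 1
    then obtain u v where "xs1 = u @ c # v" using split_list by metis
    then show ?thesis using that[of c x y u v xs2 xs3] qs xy by auto
  next
    case 2
    then obtain u v where "xs2 = u @ c # v" using split_list by metis
    then show ?thesis using that[of x c y xs1 u v xs3] qs xy by auto
  next
    case 3
    then obtain u v where "xs3 = u @ c # v" using split_list by metis
    then show ?thesis using that[of x y c xs1 xs2 u v] qs xy by auto
  qed
qed

lemma concat_map_two_changes:
  assumes "distinct qs" "a \<in> set qs" "b \<in> set qs" "a \<noteq> b"
    and "\<And>q. q \<notin> {a, b} \<Longrightarrow> X q = Y q"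
  obtains x y u1 u2 u3 where "{x, y} = {a, b}"
    "concat (map (\<lambda>q. A q @ X q @ B q) qs) = u1 @ X x @ u2 @ X y @ u3"
    "concat (map (\<lambda>q. A q @ Y q @ B q) qs) = u1 @ Y x @ u2 @ Y y @ u3"
proof -
  obtain x y xs1 xs2 xs3 where xy: "{x, y} = {a, b}" and qs: "qs = xs1 @ x # xs2 @ y # xs3"
    using split_list_two[OF assms(2-4)] by blast
  let ?F = "\<lambda>q. A q @ X q @ B q" and ?G = "\<lambda>q. A q @ Y q @ B q"
  have "q \<notin> {a, b}" if "q \<in> set xs1 \<union> set xs2 \<union> set xs3" for q
    using that assms(1) qs xy by auto
  then have "concat (map ?F xs) = concat (map ?G xs)" if "xs \<in> {xs1, xs2, xs3}" for xs
    using that assms(5) by (auto intro!: arg_cong[where f = concat])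
  then show ?thesis
    using that[OF xy, of "concat (map ?G xs1) @ A x" "B x @ concat (map ?G xs2) @ A y"
        "B y @ concat (map ?G xs3)"] qs by simp
qed

lemma concat_map_three_changes:
  assumes "distinct qs" "a \<in> set qs" "b \<in> set qs" "c \<in> set qs" "distinct [a, b, c]"
    and "\<And>q. q \<notin> {a, b, c} \<Longrightarrow> X q = Y q"
  obtains x y z u1 u2 u3 u4 where "{x, y, z} = {a, b, c}"
    "concat (map (\<lambda>q. A q @ X q @ B q) qs) = u1 @ X x @ u2 @ X y @ u3 @ X z @ u4"
    "concat (map (\<lambda>q. A q @ Y q @ B q) qs) = u1 @ Y x @ u2 @ Y y @ u3 @ Y z @ u4"
proof -
  obtain x y z xs1 xs2 xs3 xs4 where xyz: "{x, y, z} = {a, b, c}"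
    and qs: "qs = xs1 @ x # xs2 @ y # xs3 @ z # xs4"
    using split_list_three[OF assms(2-5)] by blast
  let ?F = "\<lambda>q. A q @ X q @ B q" and ?G = "\<lambda>q. A q @ Y q @ B q"
  have "q \<notin> {a, b, c}" if "q \<in> set xs1 \<union> set xs2 \<union> set xs3 \<union> set xs4" for q
    using that assms(1) qs xyz by auto
  then have "concat (map ?F xs) = concat (map ?G xs)" if "xs \<in> {xs1, xs2, xs3, xs4}" for xs
    using that assms(6) by (auto intro!: arg_cong[where f = concat])
  then show ?thesis
    using that[OF xyz, of "concat (map ?G xs1) @ A x" "B x @ concat (map ?G xs2) @ A y"
        "B y @ concat (map ?G xs3) @ A z" "B z @ concat (map ?G xs4)"] qs by simp
qed

lemma r3_segments_swap12: "r3_segments S1 S2 S3 \<Longrightarrow> r3_segments S2 S1 S3"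
  unfolding r3_segments_def Let_def by blast

lemma r3_segments_swap23: "r3_segments S1 S2 S3 \<Longrightarrow> r3_segments S1 S3 S2"
  unfolding r3_segments_def Let_def by blast

lemma r3_segments_perm:
  assumes "r3_segments (S a) (S b) (S c)" "distinct [a, b, c]" "{x, y, z} = {a, b, c}"
  shows "r3_segments (S x) (S y) (S z)"
proof -
  have "card (set [x, y, z]) = 3" using assms(2,3) by (simp add: distinct_card[of "[a, b, c]", simplified])
  then have "distinct [x, y, z]" by (intro card_distinct) simp
  moreover have "x \<in> {a, b, c}" "y \<in> {a, b, c}" "z \<in> {a, b, c}" using assms(3) by blast+
  ultimately consider "(x, y, z) = (a, b, c)" | "(x, y, z) = (a, c, b)" | "(x, y, z) = (b, a, c)"
    | "(x, y, z) = (b, c, a)" | "(x, y, z) = (c, a, b)" | "(x, y, z) = (c, b, a)"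
    by auto
  then show ?thesis
  proof cases
    case 1
    then show ?thesis using assms(1) by simp
  next
    case 2
    then show ?thesis using r3_segments_swap23[OF assms(1)] by simp
  next
    case 3
    then show ?thesis using r3_segments_swap12[OF assms(1)] by simp
  next
    case 4
    then show ?thesis using r3_segments_swap23[OF r3_segments_swap12[OF assms(1)]] by simp
  next
    case 5
    then show ?thesis using r3_segments_swap12[OF r3_segments_swap23[OF assms(1)]] by simp
  next
    case 6
    then show ?thesis
      using r3_segments_swap12[OF r3_segments_swap23[OF r3_segments_swap12[OF assms(1)]]] by simp
  qed
qed

lemma r3_segments_staircase:
  assumes "distinct [l1, l2, l3]"
  shows "r3_segments [(l1, b, \<not> b), (l2, b, \<not> b)] [(l1, \<not> b, \<not> b), (l3, \<not> e, e)]
    [(l2, \<not> b, \<not> b), (l3, e, e)]"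
proof (cases b; cases e)
  assume sig: b e
  show ?thesis unfolding r3_segments_def Let_def sg_def
    apply (rule exI[of _ l2], rule exI[of _ l1], rule exI[of _ l3])
    apply (rule exI[of _ False], rule exI[of _ False], rule exI[of _ True])
    apply (rule exI[of _ False], rule exI[of _ True], rule exI[of _ True], rule exI[of _ True])
    using assms sig by auto
next
  assume sig: b "\<not> e"
  show ?thesis unfolding r3_segments_def Let_def sg_def
    apply (rule exI[of _ l1], rule exI[of _ l2], rule exI[of _ l3])
    apply (rule exI[of _ False], rule exI[of _ False], rule exI[of _ False])
    apply (rule exI[of _ True], rule exI[of _ True], rule exI[of _ True], rule exI[of _ False])
    using assms sig by auto
next
  assume sig: "\<not> b" e
  show ?thesis unfolding r3_segments_def Let_def sg_def
    apply (rule exI[of _ l3], rule exI[of _ l2], rule exI[of _ l1])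
    apply (rule exI[of _ True], rule exI[of _ True], rule exI[of _ True])
    apply (rule exI[of _ False], rule exI[of _ False], rule exI[of _ False], rule exI[of _ True])
    using assms sig by auto
next
  assume sig: "\<not> b" "\<not> e"
  show ?thesis unfolding r3_segments_def Let_def sg_def
    apply (rule exI[of _ l3], rule exI[of _ l1], rule exI[of _ l2])
    apply (rule exI[of _ False], rule exI[of _ True], rule exI[of _ True])
    apply (rule exI[of _ False], rule exI[of _ False], rule exI[of _ True], rule exI[of _ False])
    using assms sig by auto
qed

fun descending :: "bool \<Rightarrow> nat set \<Rightarrow> gcode \<Rightarrow> bool" where
  "descending b S [] = True"
| "descending b S (e # w) = ((fst e \<notin> S \<longrightarrow> is_over e = b) \<and> descending b (insert (fst e) S) w)"

lemma descending_filter: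
  assumes "descending b S w" "\<And>c. c \<notin> L \<Longrightarrow> c \<in> S' \<longleftrightarrow> c \<in> S"
  shows "descending b S' (filter (\<lambda>e. fst e \<notin> L) w)"
  using assms
proof (induction w arbitrary: S S')
  case (Cons e w)
  show ?case
  proof (cases "fst e \<in> L")
    case True
    then show ?thesis using Cons.prems Cons.IH[of "insert (fst e) S" S'] by auto
  next
    case False
    then show ?thesis using Cons.prems Cons.IH[of "insert (fst e) S" "insert (fst e) S'"] by auto
  qed
qed simp

lemma descending_swap:
  "descending b S (p @ [x, y] @ q) \<Longrightarrow> fst x \<noteq> fst y \<Longrightarrow> descending b S (p @ [y, x] @ q)"
  by (induction p arbitrary: S) (auto simp: insert_commute)

lemma descending_distinct_prefix:
  assumes "descending b S (P @ R)" "distinct (map fst P)" "fst ` set P \<inter> S = {}"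
  shows "\<forall>e\<in>set P. is_over e = b"
  using assms
proof (induction P arbitrary: S)
  case (Cons e P)
  have first: "fst e \<notin> S \<longrightarrow> is_over e = b" and rest: "descending b (insert (fst e) S) (P @ R)"
    using Cons.prems(1) by simp_all
  have "fst ` set P \<inter> insert (fst e) S = {}" using Cons.prems(2,3) by auto
  then have "\<forall>e\<in>set P. is_over e = b" using Cons.IH[OF rest] Cons.prems(2) by simp
  then show ?case using first Cons.prems(3) by simp
qed simp

(* The braid relation is only needed, and only provided, with its first two letters taken from a
  staircase of sign \<not> b. *)
inductive word_move :: "bool \<Rightarrow> cletter list \<Rightarrow> cletter list \<Rightarrow> bool" for b where
  commute: "Suc m < m' \<or> Suc m' < m \<Longrightarrow>
    word_move b (U @ [(l, m, e), (l', m', e')] @ V) (U @ [(l', m', e'), (l, m, e)] @ V)"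
| cancel: "word_move b (U @ [(l1, m, e), (l2, m, \<not> e)] @ V) (U @ V)"
| braid: "word_move b (U @ [(l1, Suc m, \<not> b), (l2, m, \<not> b), (l3, Suc m, e)] @ V)
    (U @ [(l3, m, e), (l2, Suc m, \<not> b), (l1, m, \<not> b)] @ V)"

lemma word_move_exit_pos: "word_move b W W' \<Longrightarrow> exit_pos W = exit_pos W'"
  by (induction rule: word_move.induct) (auto simp: fun_eq_iff sw_def)

lemma word_move_knot_word: "word_move b W W' \<Longrightarrow> knot_word i W \<Longrightarrow> knot_word i W'"
proof (induction rule: word_move.induct)
  case (commute m m' U l e l' e' V)
  then show ?case
    using vclosure_is_knot_cong[OF word_move_exit_pos[OF word_move.commute[OF commute.hyps]]]
    by (auto simp: knot_word_def)
next
  case (cancel U l1 m e l2 V)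
  then show ?case
    using vclosure_is_knot_cong[OF word_move_exit_pos[OF word_move.cancel]]
    by (auto simp: knot_word_def)
next
  case (braid U l1 m l2 l3 e V)
  then show ?case
    using vclosure_is_knot_cong[OF word_move_exit_pos[OF word_move.braid]]
    by (auto simp: knot_word_def)
qed

lemma word_move_append: "word_move b W W' \<Longrightarrow> word_move b (P @ W @ Q) (P @ W' @ Q)"
proof (induction rule: word_move.induct)
  case (commute m m' U l e l' e' V)
  then show ?case using word_move.commute[where U = "P @ U" and V = "V @ Q"] by simp
next
  case (cancel U l1 m e l2 V)
  then show ?case using word_move.cancel[where U = "P @ U" and V = "V @ Q"] by simp
next
  case (braid U l1 m l2 l3 e V)
  then show ?case using word_move.braid[where U = "P @ U" and V = "V @ Q"] by simp
qed

lemma word_moves_append: "(word_move b)\<^sup>*\<^sup>* W W' \<Longrightarrow> (word_move b)\<^sup>*\<^sup>* (P @ W @ Q) (P @ W' @ Q)"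
  by (induction rule: rtranclp_induct) (auto intro: rtranclp.rtrancl_into_rtrancl word_move_append)

lemma vclosure_code_block_cong:
  assumes "exit_pos L = exit_pos L'" "\<And>p. strand_code L p = strand_code L' p"
  shows "vclosure_code i (U @ L @ V) = vclosure_code i (U @ L' @ V)"
proof -
  have "exit_pos (U @ L @ V) = exit_pos (U @ L' @ V)" using assms(1) by (simp add: fun_eq_iff)
  then have "strand_orbit i (U @ L @ V) = strand_orbit i (U @ L' @ V)" by (rule strand_orbit_cong)
  moreover have "strand_code (U @ L @ V) = strand_code (U @ L' @ V)" using assms by (simp add: fun_eq_iff)
  ultimately show ?thesis unfolding vclosure_code_def by (simp only:)
qed

lemma vclosure_code_commute:
  "Suc m < m' \<or> Suc m' < m \<Longrightarrow>
   vclosure_code i (U @ [(l, m, e), (l', m', e')] @ V) = vclosure_code i (U @ [(l', m', e'), (l, m, e)] @ V)"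
  by (rule vclosure_code_block_cong) (auto simp: fun_eq_iff sw_def)

lemma vclosure_code_block:
  assumes "exit_pos L' = exit_pos L"
  shows "vclosure_code i (U @ L' @ V) = concat (map (\<lambda>q. strand_code U q @ strand_code L' (exit_pos U q) @
    strand_code V (exit_pos L (exit_pos U q))) (strand_orbit i (U @ L @ V)))"
proof -
  have "strand_orbit i (U @ L' @ V) = strand_orbit i (U @ L @ V)"
    using assms by (intro strand_orbit_cong) (simp add: fun_eq_iff)
  moreover have "strand_code (U @ L' @ V) = (\<lambda>q. strand_code U q @ strand_code L' (exit_pos U q) @
      strand_code V (exit_pos L (exit_pos U q)))"
    using assms by (simp add: fun_eq_iff)
  ultimately show ?thesis unfolding vclosure_code_def by (simp only:)
qed

lemma vclosure_code_block2:
  assumes "knot_word i (U @ L @ V)" "exit_pos L' = exit_pos L" "1 \<le> m" "m < i"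
    and "\<And>p. p \<notin> {m, Suc m} \<Longrightarrow> strand_code L p = strand_code L' p"
  obtains x y u1 u2 u3 where "{x, y} = {m, Suc m}"
    "vclosure_code i (U @ L @ V) = u1 @ strand_code L x @ u2 @ strand_code L y @ u3"
    "vclosure_code i (U @ L' @ V) = u1 @ strand_code L' x @ u2 @ strand_code L' y @ u3"
proof -
  let ?qs = "strand_orbit i (U @ L @ V)"
  define X Y B where "X q = strand_code L (exit_pos U q)" and "Y q = strand_code L' (exit_pos U q)"
    and "B q = strand_code V (exit_pos L (exit_pos U q))" for q
  define a b where "a = exit_pos (rev U) m" and "b = exit_pos (rev U) (Suc m)"
  have code: "vclosure_code i (U @ L @ V) = concat (map (\<lambda>q. strand_code U q @ X q @ B q) ?qs)"
    "vclosure_code i (U @ L' @ V) = concat (map (\<lambda>q. strand_code U q @ Y q @ B q) ?qs)"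
    using vclosure_code_block[OF refl, of i U L V] vclosure_code_block[OF assms(2), of i U V]
    by (simp_all add: X_def Y_def B_def)
  have U: "on_strands i U" and qs: "distinct ?qs" "set ?qs = {1..i}"
    using assms(1) set_strand_orbit by (auto simp: knot_word_def vclosure_is_knot_def)
  have "a \<in> set ?qs" "b \<in> set ?qs"
    using exit_pos_in_range[of i "rev U"] U assms(3,4) qs(2) by (auto simp: a_def b_def)
  moreover have "a \<noteq> b" by (simp add: a_def b_def exit_pos_eq_iff)
  moreover have "X q = Y q" if "q \<notin> {a, b}" for q
  proof -
    have "exit_pos U q \<notin> {m, Suc m}" using that exit_pos_rev[of U q] by (auto simp: a_def b_def)
    then show ?thesis using assms(5) by (simp add: X_def Y_def)
  qed
  ultimately obtain x' y' u1 u2 u3 where xy: "{x', y'} = {a, b}"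
    and "vclosure_code i (U @ L @ V) = u1 @ X x' @ u2 @ X y' @ u3"
    and "vclosure_code i (U @ L' @ V) = u1 @ Y x' @ u2 @ Y y' @ u3"
    unfolding code by (rule concat_map_two_changes[OF qs(1)])
  moreover have "{exit_pos U x', exit_pos U y'} = {m, Suc m}"
  proof -
    have "exit_pos U ` {x', y'} = exit_pos U ` {a, b}" using xy by simp
    then show ?thesis by (simp add: a_def b_def exit_pos_rev')
  qed
  ultimately show ?thesis using that[of "exit_pos U x'" "exit_pos U y'" u1 u2 u3] by (simp add: X_def Y_def)
qed

lemma vclosure_code_block3:
  assumes "knot_word i (U @ L @ V)" "exit_pos L' = exit_pos L" "1 \<le> m" "Suc m < i"
    and "\<And>p. p \<notin> {m, Suc m, Suc (Suc m)} \<Longrightarrow> strand_code L p = strand_code L' p"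
  obtains x y z u1 u2 u3 u4 where "{x, y, z} = {m, Suc m, Suc (Suc m)}"
    "vclosure_code i (U @ L @ V) = u1 @ strand_code L x @ u2 @ strand_code L y @ u3 @ strand_code L z @ u4"
    "vclosure_code i (U @ L' @ V) = u1 @ strand_code L' x @ u2 @ strand_code L' y @ u3 @ strand_code L' z @ u4"
proof -
  let ?qs = "strand_orbit i (U @ L @ V)"
  define X Y B where "X q = strand_code L (exit_pos U q)" and "Y q = strand_code L' (exit_pos U q)"
    and "B q = strand_code V (exit_pos L (exit_pos U q))" for q
  define a b c where "a = exit_pos (rev U) m" and "b = exit_pos (rev U) (Suc m)"
    and "c = exit_pos (rev U) (Suc (Suc m))"
  have code: "vclosure_code i (U @ L @ V) = concat (map (\<lambda>q. strand_code U q @ X q @ B q) ?qs)"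
    "vclosure_code i (U @ L' @ V) = concat (map (\<lambda>q. strand_code U q @ Y q @ B q) ?qs)"
    using vclosure_code_block[OF refl, of i U L V] vclosure_code_block[OF assms(2), of i U V]
    by (simp_all add: X_def Y_def B_def)
  have U: "on_strands i U" and qs: "distinct ?qs" "set ?qs = {1..i}"
    using assms(1) set_strand_orbit by (auto simp: knot_word_def vclosure_is_knot_def)
  have "a \<in> set ?qs" "b \<in> set ?qs" "c \<in> set ?qs"
    using exit_pos_in_range[of i "rev U"] U assms(3,4) qs(2) by (auto simp: a_def b_def c_def)
  moreover have "distinct [a, b, c]" by (simp add: a_def b_def c_def exit_pos_eq_iff)
  moreover have "X q = Y q" if "q \<notin> {a, b, c}" for q
  proof -
    have "exit_pos U q \<notin> {m, Suc m, Suc (Suc m)}" using that exit_pos_rev[of U q] by (auto simp: a_def b_def c_def)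
    then show ?thesis using assms(5) by (simp add: X_def Y_def)
  qed
  ultimately obtain x' y' z' u1 u2 u3 u4 where xyz: "{x', y', z'} = {a, b, c}"
    and "vclosure_code i (U @ L @ V) = u1 @ X x' @ u2 @ X y' @ u3 @ X z' @ u4"
    and "vclosure_code i (U @ L' @ V) = u1 @ Y x' @ u2 @ Y y' @ u3 @ Y z' @ u4"
    unfolding code by (rule concat_map_three_changes[OF qs(1)])
  moreover have "{exit_pos U x', exit_pos U y', exit_pos U z'} = {m, Suc m, Suc (Suc m)}"
  proof -
    have "exit_pos U ` {x', y', z'} = exit_pos U ` {a, b, c}" using xyz by simp
    then show ?thesis by (simp add: a_def b_def c_def exit_pos_rev')
  qed
  ultimately show ?thesis using that[of "exit_pos U x'" "exit_pos U y'" "exit_pos U z'" u1 u2 u3 u4]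
    by (simp add: X_def Y_def)
qed

lemma vclosure_code_cancel:
  assumes "knot_word i (U @ [(l1, m, e), (l2, m, \<not> e)] @ V)"
  obtains c u1 u2 u3 where
    "vclosure_code i (U @ [(l1, m, e), (l2, m, \<not> e)] @ V) =
       u1 @ [(l1, c, e), (l2, c, \<not> e)] @ u2 @ [(l1, \<not> c, e), (l2, \<not> c, \<not> e)] @ u3"
    "vclosure_code i (U @ V) = u1 @ u2 @ u3"
proof -
  let ?L = "[(l1, m, e), (l2, m, \<not> e)]"
  have m: "1 \<le> m" "m < i" using assms by (auto simp: knot_word_def)
  have "exit_pos [] = exit_pos ?L" by (simp add: fun_eq_iff)
  moreover have "strand_code ?L p = strand_code [] p" if "p \<notin> {m, Suc m}" for p
    using that by (simp add: sw_def)
  ultimately obtain x y u1 u2 u3 where xy: "{x, y} = {m, Suc m}"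
    and code: "vclosure_code i (U @ ?L @ V) = u1 @ strand_code ?L x @ u2 @ strand_code ?L y @ u3"
      "vclosure_code i (U @ [] @ V) = u1 @ strand_code [] x @ u2 @ strand_code [] y @ u3"
    by (rule vclosure_code_block2[OF assms _ m])
  have "strand_code ?L m = [(l1, e, e), (l2, e, \<not> e)]"
    "strand_code ?L (Suc m) = [(l1, \<not> e, e), (l2, \<not> e, \<not> e)]"
    by (simp_all add: sw_def)
  moreover have "x = m \<and> y = Suc m \<or> x = Suc m \<and> y = m" using xy by (auto simp: doubleton_eq_iff)
  ultimately show ?thesis using that[of u1 e u2 u3] that[of u1 "\<not> e" u2 u3] code by auto
qed

lemma strand_code_braid_rev:
  "strand_code [(l3, m, e), (l2, Suc m, c), (l1, m, c)] p =
   rev (strand_code [(l1, Suc m, c), (l2, m, c), (l3, Suc m, e)] p)"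
  by (auto simp: sw_def)

lemma vclosure_code_braid:
  assumes "knot_word i (U @ [(l1, Suc m, \<not> b), (l2, m, \<not> b), (l3, Suc m, e)] @ V)"
  obtains S1 S2 S3 u1 u2 u3 u4 where "r3_segments S1 S2 S3"
    "\<forall>S\<in>{S1, S2, S3}. \<exists>x y. S = [x, y] \<and> fst x \<noteq> fst y"
    "vclosure_code i (U @ [(l1, Suc m, \<not> b), (l2, m, \<not> b), (l3, Suc m, e)] @ V) =
       u1 @ S1 @ u2 @ S2 @ u3 @ S3 @ u4"
    "vclosure_code i (U @ [(l3, m, e), (l2, Suc m, \<not> b), (l1, m, \<not> b)] @ V) =
       u1 @ rev S1 @ u2 @ rev S2 @ u3 @ rev S3 @ u4"
proof -
  let ?L = "[(l1, Suc m, \<not> b), (l2, m, \<not> b), (l3, Suc m, e)]"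
  let ?L' = "[(l3, m, e), (l2, Suc m, \<not> b), (l1, m, \<not> b)]"
  have m: "1 \<le> m" "Suc m < i" and labels: "distinct [l1, l2, l3]"
    using assms by (auto simp: knot_word_def)
  have rev: "strand_code ?L' p = rev (strand_code ?L p)" for p by (rule strand_code_braid_rev)
  have "exit_pos ?L' = exit_pos ?L" by (auto simp: fun_eq_iff sw_def)
  moreover have "strand_code ?L p = strand_code ?L' p" if "p \<notin> {m, Suc m, Suc (Suc m)}" for p
    using that by (simp add: sw_def)
  ultimately obtain x y z u1 u2 u3 u4 where xyz: "{x, y, z} = {m, Suc m, Suc (Suc m)}"
    and code: "vclosure_code i (U @ ?L @ V) =
        u1 @ strand_code ?L x @ u2 @ strand_code ?L y @ u3 @ strand_code ?L z @ u4"
      "vclosure_code i (U @ ?L' @ V) =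
        u1 @ strand_code ?L' x @ u2 @ strand_code ?L' y @ u3 @ strand_code ?L' z @ u4"
    by (rule vclosure_code_block3[OF assms _ m])
  define X where "X = strand_code ?L"
  have segments: "X (Suc (Suc m)) = [(l1, b, \<not> b), (l2, b, \<not> b)]"
    "X (Suc m) = [(l1, \<not> b, \<not> b), (l3, \<not> e, e)]" "X m = [(l2, \<not> b, \<not> b), (l3, e, e)]"
    by (simp_all add: X_def sw_def)
  then have "r3_segments (X (Suc (Suc m))) (X (Suc m)) (X m)" using r3_segments_staircase[OF labels] by simp
  moreover have "{x, y, z} = {Suc (Suc m), Suc m, m}" using xyz by blast
  ultimately have r3: "r3_segments (X x) (X y) (X z)"
    using r3_segments_perm[of X "Suc (Suc m)" "Suc m" m x y z] by simp
  have "\<exists>s t. X p = [s, t] \<and> fst s \<noteq> fst t" if "p \<in> {m, Suc m, Suc (Suc m)}" for p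
    using that segments labels by auto
  then have pairs: "\<forall>S\<in>{X x, X y, X z}. \<exists>s t. S = [s, t] \<and> fst s \<noteq> fst t"
    using xyz by blast
  have "vclosure_code i (U @ ?L @ V) = u1 @ X x @ u2 @ X y @ u3 @ X z @ u4"
    using code(1) by (simp only: X_def)
  moreover have "vclosure_code i (U @ ?L' @ V) = u1 @ rev (X x) @ u2 @ rev (X y) @ u3 @ rev (X z) @ u4"
    using code(2) by (simp only: X_def rev)
  ultimately show ?thesis using r3 pairs by (intro that)
qed

lemma knot_word_cancel_labels:
  assumes "knot_word i (U @ [(l1, m, e), (l2, m, \<not> e)] @ V)"
  shows "l1 \<noteq> l2" "l1 \<notin> labels (vclosure_code i (U @ V))" "l2 \<notin> labels (vclosure_code i (U @ V))"
  using assms labels_vclosure_code[of i "U @ V"] by (auto simp: knot_word_def)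

lemma word_move_vequiv:
  assumes "word_move b W W'" "knot_word i W"
  shows "vequiv (vclosure_code i W) (vclosure_code i W')"
  using assms(1)
proof cases
  case (commute m m' U l e l' e' V)
  have "vclosure_code i W = vclosure_code i W'"
    unfolding commute(1,2) by (rule vclosure_code_commute[OF commute(3)])
  then show ?thesis by simp
next
  case (cancel U l1 m e l2 V)
  obtain c u1 u2 u3 where code:
    "vclosure_code i W = u1 @ [(l1, c, e), (l2, c, \<not> e)] @ u2 @ [(l1, \<not> c, e), (l2, \<not> c, \<not> e)] @ u3"
    "vclosure_code i W' = u1 @ u2 @ u3"
    using vclosure_code_cancel assms(2) cancel by metis
  have "vmove (u1 @ u2 @ u3) (u1 @ [(l1, c, e), (l2, c, \<not> e)] @ u2 @ [(l1, \<not> c, e), (l2, \<not> c, \<not> e)] @ u3)"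
    using knot_word_cancel_labels[of i U l1 m e l2 V] assms(2) cancel code by (intro vmove.R2) auto
  then show ?thesis using code by (simp add: vequiv_vmove_rev)
next
  case (braid U l1 m l2 l3 e V)
  obtain S1 S2 S3 u1 u2 u3 u4 where "r3_segments S1 S2 S3"
    "vclosure_code i W = u1 @ S1 @ u2 @ S2 @ u3 @ S3 @ u4"
    "vclosure_code i W' = u1 @ rev S1 @ u2 @ rev S2 @ u3 @ rev S3 @ u4"
    using vclosure_code_braid assms(2) braid by metis
  then show ?thesis by (simp add: vequiv_vmove vmove.R3)
qed

lemma word_move_descending:
  assumes "word_move b W W'" "knot_word i W" "descending c {} (vclosure_code i W)"
  shows "descending c {} (vclosure_code i W')"
  using assms(1)
proof cases
  case (commute m m' U l e l' e' V)
  have "vclosure_code i W = vclosure_code i W'"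
    unfolding commute(1,2) by (rule vclosure_code_commute[OF commute(3)])
  then show ?thesis using assms(3) by simp
next
  case (cancel U l1 m e l2 V)
  obtain c u1 u2 u3 where code:
    "vclosure_code i W = u1 @ [(l1, c, e), (l2, c, \<not> e)] @ u2 @ [(l1, \<not> c, e), (l2, \<not> c, \<not> e)] @ u3"
    "vclosure_code i W' = u1 @ u2 @ u3"
    using vclosure_code_cancel assms(2) cancel by metis
  have "\<forall>e\<in>set (u1 @ u2 @ u3). fst e \<notin> {l1, l2}"
    using knot_word_cancel_labels[of i U l1 m e l2 V] assms(2) cancel code by (auto simp: labels_def)
  then have "vclosure_code i W' = filter (\<lambda>e. fst e \<notin> {l1, l2}) (vclosure_code i W)"
    using code by simp
  then show ?thesis using descending_filter[OF assms(3), of "{l1, l2}" "{}"] by simp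
next
  case (braid U l1 m l2 l3 e V)
  obtain S1 S2 S3 u1 u2 u3 u4 where pairs: "\<forall>S\<in>{S1, S2, S3}. \<exists>x y. S = [x, y] \<and> fst x \<noteq> fst y"
    and code: "vclosure_code i W = u1 @ S1 @ u2 @ S2 @ u3 @ S3 @ u4"
      "vclosure_code i W' = u1 @ rev S1 @ u2 @ rev S2 @ u3 @ rev S3 @ u4"
    using vclosure_code_braid assms(2) braid by metis
  have swap: "descending c {} (p @ S @ q) \<Longrightarrow> descending c {} (p @ rev S @ q)" if "S \<in> {S1, S2, S3}" for p S q
    using pairs that descending_swap by fastforce
  have "descending c {} (u1 @ rev S1 @ u2 @ S2 @ u3 @ S3 @ u4)"
    using swap[where p = u1 and S = S1 and q = "u2 @ S2 @ u3 @ S3 @ u4"] assms(3) code(1) by simp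
  then have "descending c {} ((u1 @ rev S1 @ u2) @ rev S2 @ u3 @ S3 @ u4)"
    using swap[where p = "u1 @ rev S1 @ u2" and S = S2 and q = "u3 @ S3 @ u4"] by simp
  then have "descending c {} ((u1 @ rev S1 @ u2 @ rev S2 @ u3) @ rev S3 @ u4)"
    using swap[where p = "u1 @ rev S1 @ u2 @ rev S2 @ u3" and S = S3 and q = u4] by simp
  then show ?thesis using code(2) by simp
qed

lemma word_moves_vclosure:
  assumes "(word_move b)\<^sup>*\<^sup>* W W'" "knot_word i W"
  shows "knot_word i W' \<and> vequiv (vclosure_code i W) (vclosure_code i W') \<and>
    (descending c {} (vclosure_code i W) \<longrightarrow> descending c {} (vclosure_code i W'))"
  using assms
proof (induction rule: rtranclp_induct)
  case (step W' W'')
  then show ?case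
    using word_move_knot_word word_move_vequiv word_move_descending vequiv_trans by metis
qed simp

(* sigma_(i-1) ... sigma_q, all of sign \<not> b: it carries the strand at position i down to q,
  passing over (b = True) or under (b = False) every strand it meets. *)
definition staircase :: "bool \<Rightarrow> nat \<Rightarrow> nat \<Rightarrow> cletter list \<Rightarrow> bool" where
  "staircase b i q T \<longleftrightarrow> map idx T = rev [q..<i] \<and> (\<forall>x\<in>set T. snd (snd x) = (\<not> b))"

lemma idx_in_set: "map idx T = ns \<Longrightarrow> x \<in> set T \<Longrightarrow> idx x \<in> set ns"
  by (metis image_eqI list.set_map)

lemma staircase_idx: "staircase b i q T \<Longrightarrow> x \<in> set T \<Longrightarrow> q \<le> idx x \<and> idx x < i"
  using idx_in_set[of T "rev [q..<i]" x] by (simp add: staircase_def)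

lemma word_moves_commute_past:
  "\<forall>y\<in>set T. Suc m < idx y \<or> Suc (idx y) < m \<Longrightarrow> (word_move b)\<^sup>*\<^sup>* (T @ [(l, m, e)]) ((l, m, e) # T)"
proof (induction T)
  case (Cons t T)
  obtain lt mt et where t: "t = (lt, mt, et)" by (cases t)
  have "(word_move b)\<^sup>*\<^sup>* ([t] @ (T @ [(l, m, e)]) @ []) ([t] @ ((l, m, e) # T) @ [])"
    using Cons by (intro word_moves_append) simp
  moreover have "word_move b ([] @ [(lt, mt, et), (l, m, e)] @ T) ([] @ [(l, m, e), (lt, mt, et)] @ T)"
    using Cons.prems t by (intro word_move.commute) auto
  ultimately show ?case using t by (simp add: rtranclp.rtrancl_into_rtrancl)
qed simp

lemma staircase_commute:
  assumes "staircase b i q T" "Suc m < q"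
  shows "(word_move b)\<^sup>*\<^sup>* (T @ [(l, m, e)]) ((l, m, e) # T)"
  using assms staircase_idx[OF assms(1)] by (intro word_moves_commute_past) fastforce

lemma staircase_extend:
  assumes "staircase b i (Suc m) T" "m < i"
  shows "staircase b i m (T @ [(l, m, \<not> b)])"
  using assms by (simp add: staircase_def upt_rec[of m i])

lemma staircase_cancel:
  assumes "staircase b i q T" "q < i"
  obtains T' where "word_move b (T @ [(l, q, b)]) T'" "staircase b i (Suc q) T'"
proof -
  have "rev [q..<i] = rev [Suc q..<i] @ [q]" using assms(2) by (simp add: upt_rec[of q i])
  then obtain T' t where T: "T = T' @ [t]" and T': "map idx T' = rev [Suc q..<i]" and t: "idx t = q"
    using assms(1) by (auto simp: staircase_def map_eq_append_conv)
  obtain l' where l': "t = (l', q, \<not> b)" using assms(1) T t by (cases t) (auto simp: staircase_def)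
  have "word_move b (T' @ [(l', q, \<not> b), (l, q, \<not> \<not> b)] @ []) (T' @ [])"
    by (rule word_move.cancel)
  then show ?thesis using that[of T'] T T' assms(1) l' by (simp add: staircase_def)
qed

lemma rev_upt_split3:
  assumes "q \<le> m" "Suc m < i"
  shows "rev [q..<i] = rev [Suc (Suc m)..<i] @ [Suc m, m] @ rev [q..<m]"
proof -
  have "[q..<i] = [q..<m] @ [m..<i]" using assms upt_add_eq_append[of q m "i - m"] by simp
  moreover have "[m..<i] = m # Suc m # [Suc (Suc m)..<i]" using assms by (simp add: upt_rec[of m i] upt_rec[of "Suc m" i])
  ultimately show ?thesis by simp
qed

lemma staircase_split:
  assumes "staircase b i q T" "q \<le> m" "Suc m < i"
  obtains Ta l1 l2 Tb where "T = Ta @ [(l1, Suc m, \<not> b), (l2, m, \<not> b)] @ Tb"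
    "map idx Ta = rev [Suc (Suc m)..<i]" "map idx Tb = rev [q..<m]"
proof -
  obtain Ta R where T: "T = Ta @ R" and Ta: "map idx Ta = rev [Suc (Suc m)..<i]"
    and R: "map idx R = [Suc m, m] @ rev [q..<m]"
    using assms(1) rev_upt_split3[OF assms(2,3)] by (auto simp: staircase_def map_eq_append_conv)
  then obtain t1 t2 Tb where R': "R = t1 # t2 # Tb" and t: "idx t1 = Suc m" "idx t2 = m"
    and Tb: "map idx Tb = rev [q..<m]"
    by (auto simp: map_eq_Cons_conv)
  obtain l1 l2 where "t1 = (l1, Suc m, \<not> b)" and "t2 = (l2, m, \<not> b)"
    using assms(1) T R' t by (cases t1, cases t2) (auto simp: staircase_def)
  then show ?thesis using that T R' Ta Tb by simp
qed

lemma staircase_braid: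
  assumes "staircase b i q T" "q \<le> m" "Suc m < i"
  obtains T' where "(word_move b)\<^sup>*\<^sup>* (T @ [(l, Suc m, e)]) ((l, m, e) # T')" "staircase b i q T'"
proof -
  obtain Ta l1 l2 Tb where T: "T = Ta @ [(l1, Suc m, \<not> b), (l2, m, \<not> b)] @ Tb"
    and Ta: "map idx Ta = rev [Suc (Suc m)..<i]" and Tb: "map idx Tb = rev [q..<m]"
    using staircase_split[OF assms] by blast
  define T' where "T' = Ta @ [(l2, Suc m, \<not> b), (l1, m, \<not> b)] @ Tb"
  have "\<forall>y\<in>set Tb. Suc (Suc m) < idx y \<or> Suc (idx y) < Suc m"
    using idx_in_set[OF Tb] by auto
  then have Tb_moves: "(word_move b)\<^sup>*\<^sup>* (Tb @ [(l, Suc m, e)]) ((l, Suc m, e) # Tb)"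
    by (rule word_moves_commute_past)
  have "(word_move b)\<^sup>*\<^sup>* (T @ [(l, Suc m, e)]) (Ta @ [(l1, Suc m, \<not> b), (l2, m, \<not> b), (l, Suc m, e)] @ Tb)"
    using word_moves_append[OF Tb_moves, where P = "Ta @ [(l1, Suc m, \<not> b), (l2, m, \<not> b)]" and Q = "[]"] T
    by simp
  also have "word_move b \<dots> (Ta @ [(l, m, e), (l2, Suc m, \<not> b), (l1, m, \<not> b)] @ Tb)"
    by (rule word_move.braid)
  also have "(word_move b)\<^sup>*\<^sup>* \<dots> ((l, m, e) # T')"
  proof -
    have "\<forall>y\<in>set Ta. Suc m < idx y \<or> Suc (idx y) < m"
    proof
      fix y assume "y \<in> set Ta"
      then have "Suc (Suc m) \<le> idx y" using idx_in_set[OF Ta] by simp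
      then show "Suc m < idx y \<or> Suc (idx y) < m" by simp
    qed
    then have Ta_moves: "(word_move b)\<^sup>*\<^sup>* (Ta @ [(l, m, e)]) ((l, m, e) # Ta)"
      by (rule word_moves_commute_past)
    show ?thesis
      using word_moves_append[OF Ta_moves, where P = "[]" and Q = "[(l2, Suc m, \<not> b), (l1, m, \<not> b)] @ Tb"]
      by (simp add: T'_def)
  qed
  finally have "(word_move b)\<^sup>*\<^sup>* (T @ [(l, Suc m, e)]) ((l, m, e) # T')" .
  moreover have "staircase b i q T'"
    using assms(1) T Ta Tb rev_upt_split3[OF assms(2,3)] by (auto simp: staircase_def T'_def)
  ultimately show ?thesis using that by blast
qed

lemma staircase_absorb:
  assumes "staircase b i q T" "q \<in> {1..i}" "1 \<le> m" "m < i"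
    and "\<forall>c\<in>set (passage (l, m, e) q). is_over c = b"
  shows "\<exists>U T'. (word_move b)\<^sup>*\<^sup>* (T @ [(l, m, e)]) (U @ T') \<and> staircase b i (sw m q) T'
    \<and> on_strands (i - 1) U"
proof -
  consider "Suc m < q" | "Suc m = q" | "m = q" | "q < m" by linarith
  then show ?thesis
  proof cases
    case 1
    then have "(word_move b)\<^sup>*\<^sup>* (T @ [(l, m, e)]) ([(l, m, e)] @ T)"
      using staircase_commute[OF assms(1)] by simp
    moreover have "sw m q = q" using 1 by (simp add: sw_def)
    ultimately show ?thesis using assms 1 by fastforce
  next
    case 2
    then have "e = (\<not> b)" using assms(5) by auto
    then have "staircase b i (sw m q) (T @ [(l, m, e)])"
      using staircase_extend[of b i m T l] assms(1,4) 2 by (simp add: sw_def)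
    then show ?thesis by (intro exI[of _ "[]"] exI[of _ "T @ [(l, m, e)]"]) simp
  next
    case 3
    then have "e = b" using assms(5) by simp
    obtain T' where "word_move b (T @ [(l, q, b)]) ([] @ T')" "staircase b i (Suc q) T'"
      using staircase_cancel[OF assms(1)] assms(4) 3 by auto
    moreover have "sw m q = Suc q" using 3 by (simp add: sw_def)
    moreover have "(word_move b)\<^sup>*\<^sup>* (T @ [(l, m, e)]) ([] @ T')"
      using \<open>e = b\<close> 3 calculation(1) by simp
    ultimately show ?thesis using on_strands_Nil by metis
  next
    case 4
    then obtain m0 where m0: "m = Suc m0" "q \<le> m0" by (cases m) auto
    obtain T' where "(word_move b)\<^sup>*\<^sup>* (T @ [(l, Suc m0, e)]) ([(l, m0, e)] @ T')" "staircase b i q T'"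
      using staircase_braid[OF assms(1) m0(2), of l e] assms(4) m0(1) by auto
    moreover have "sw m q = q" using 4 by (simp add: sw_def)
    moreover have "on_strands (i - 1) [(l, m0, e)]" using assms(2,4) m0 by auto
    ultimately show ?thesis using m0(1) by metis
  qed
qed

lemma gather_strand:
  assumes "\<forall>c\<in>set (strand_code W q). is_over c = b" "staircase b i q T" "q \<in> {1..i}" "on_strands i W"
  shows "\<exists>W' T' p. (word_move b)\<^sup>*\<^sup>* (T @ W) (W' @ T') \<and> staircase b i p T' \<and>
    on_strands (i - 1) W' \<and> p \<in> {1..i}"
  using assms
proof (induction W arbitrary: q T)
  case Nil
  then show ?case by (intro exI[of _ "[]"] exI[of _ T] exI[of _ q]) simp
next
  case (Cons x W)
  obtain l m e where x: "x = (l, m, e)" by (cases x)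
  have m: "1 \<le> m" "m < i" and W: "on_strands i W" using Cons.prems(4) x by auto
  obtain U T' where absorb: "(word_move b)\<^sup>*\<^sup>* (T @ [x]) (U @ T')" "staircase b i (sw m q) T'"
    "on_strands (i - 1) U"
    using staircase_absorb[OF Cons.prems(2,3) m, of l e] Cons.prems(1) x by auto
  moreover have "sw m q \<in> {1..i}" using sw_in_range[OF m Cons.prems(3)] .
  moreover have "\<forall>c\<in>set (strand_code W (sw m q)). is_over c = b" using Cons.prems(1) x by simp
  ultimately obtain W' T'' p where IH: "(word_move b)\<^sup>*\<^sup>* (T' @ W) (W' @ T'')" "staircase b i p T''"
    "on_strands (i - 1) W'" "p \<in> {1..i}"
    using Cons.IH W by blast
  have "(word_move b)\<^sup>*\<^sup>* (T @ x # W) (U @ T' @ W)"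
    using word_moves_append[OF absorb(1), of "[]" W] by simp
  also have "(word_move b)\<^sup>*\<^sup>* \<dots> (U @ W' @ T'')"
    using word_moves_append[OF IH(1), of U "[]"] by simp
  finally have "(word_move b)\<^sup>*\<^sup>* (T @ x # W) ((U @ W') @ T'')" by simp
  moreover have "on_strands (i - 1) (U @ W')" using IH(3) absorb(3) by simp
  ultimately show ?case using IH(2,4) by blast
qed

lemma vcycle_sw: "1 \<le> m \<Longrightarrow> Suc (Suc m) \<le> i \<Longrightarrow> vcycle i (sw (Suc m) p) = sw m (vcycle i p)"
  by (auto simp: vcycle_def sw_def)

lemma passage_vcycle:
  "1 \<le> m \<Longrightarrow> Suc (Suc m) \<le> i \<Longrightarrow> passage (l, m, e) (vcycle i p) = passage (l, Suc m, e) p"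
  by (auto simp: vcycle_def)

lemma funpow_conj_involution:
  "(\<And>x. g (g x) = x) \<Longrightarrow> ((\<lambda>x. g (f (g x))) ^^ t) x = g ((f ^^ t) (g x))"
  by (induction t) simp_all

lemma return_map_rotate:
  assumes "1 \<le> m" "Suc (Suc m) \<le> i"
  shows "(return_map i (W @ [(l, Suc m, e)]) ^^ t) q = sw m ((return_map i ((l, m, e) # W) ^^ t) (sw m q))"
proof -
  have "return_map i (W @ [(l, Suc m, e)]) = (\<lambda>q. sw m (return_map i ((l, m, e) # W) (sw m q)))"
    using assms by (simp add: fun_eq_iff return_map_def vcycle_sw)
  then show ?thesis by (simp add: funpow_conj_involution)
qed

lemma vclosure_is_knot_rotate:
  assumes "1 \<le> m" "Suc (Suc m) \<le> i"
  shows "vclosure_is_knot i (W @ [(l, Suc m, e)]) \<longleftrightarrow> vclosure_is_knot i ((l, m, e) # W)"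
proof -
  have swi: "sw m i = i" using assms by (simp add: sw_def)
  have orbit: "strand_orbit i (W @ [(l, Suc m, e)]) = map (sw m) (strand_orbit i ((l, m, e) # W))"
    using return_map_rotate[OF assms] swi by (simp add: strand_orbit_def)
  have return: "(return_map i (W @ [(l, Suc m, e)]) ^^ i) i = sw m ((return_map i ((l, m, e) # W) ^^ i) i)"
    using return_map_rotate[OF assms] swi by simp
  have "inj_on (sw m) A" for A by (simp add: inj_on_def sw_eq_iff)
  moreover have "sw m y = i \<longleftrightarrow> y = i" for y using sw_eq_iff[of m y i] swi by simp
  ultimately show ?thesis unfolding vclosure_is_knot_def orbit return by (simp add: distinct_map)
qed

lemma concat_map_shift:
  "concat (map (\<lambda>t. A t @ B t) [0..<n]) @ A n = A 0 @ concat (map (\<lambda>t. B t @ A (Suc t)) [0..<n])"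
  by (induction n) auto

(* Conjugation by the virtual cycle: sigma_(m+1) at the end of the word becomes sigma_m at its front. *)
lemma vclosure_code_rotate:
  assumes "1 \<le> m" "Suc (Suc m) \<le> i" "vclosure_is_knot i ((l, m, e) # W)"
  shows "vclosure_code i ((l, m, e) # W) = vclosure_code i (W @ [(l, Suc m, e)])"
proof -
  define s where "s t = (return_map i ((l, m, e) # W) ^^ t) i" for t
  define A where "A t = passage (l, m, e) (s t)" for t
  define B where "B t = strand_code W (sw m (s t))" for t
  have swi: "sw m i = i" using assms by (simp add: sw_def)
  have orbit': "(return_map i (W @ [(l, Suc m, e)]) ^^ t) i = sw m (s t)" for t
    using return_map_rotate[OF assms(1,2), where W = W and l = l and e = e and t = t and q = i] swi by (simp add: s_def)
  have "A 0 = []" "A i = []" using assms by (simp_all add: A_def s_def vclosure_is_knot_def)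
  moreover have "A (Suc t) = passage (l, Suc m, e) (exit_pos W (sw m (s t)))" for t
    using passage_vcycle[OF assms(1,2)] by (simp add: A_def s_def return_map_def)
  ultimately have "concat (map (\<lambda>t. A t @ B t) [0..<i]) =
      concat (map (\<lambda>t. B t @ passage (l, Suc m, e) (exit_pos W (sw m (s t)))) [0..<i])"
    using concat_map_shift[of A B i] by simp
  moreover have "vclosure_code i ((l, m, e) # W) = concat (map (\<lambda>t. A t @ B t) [0..<i])"
    by (simp add: vclosure_code_def strand_orbit_def A_def B_def s_def comp_def)
  moreover have "vclosure_code i (W @ [(l, Suc m, e)]) =
      concat (map (\<lambda>t. B t @ passage (l, Suc m, e) (exit_pos W (sw m (s t)))) [0..<i])"
    by (simp add: vclosure_code_def strand_orbit_def orbit' B_def comp_def)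
  ultimately show ?thesis by simp
qed

definition lower :: "cletter \<Rightarrow> cletter" where
  "lower x = (fst x, idx x - 1, snd (snd x))"

lemma vclosure_rotate_word:
  assumes "on_strands i (W @ T)" "\<forall>x\<in>set T. 2 \<le> idx x" "vclosure_is_knot i (W @ T)"
  shows "vclosure_code i (map lower T @ W) = vclosure_code i (W @ T) \<and>
    vclosure_is_knot i (map lower T @ W)"
  using assms
proof (induction T arbitrary: W rule: rev_induct)
  case (snoc y T)
  define l m e where "l = fst y" and "m = idx y - 1" and "e = snd (snd y)"
  have "2 \<le> idx y" "idx y < i" using snoc.prems(1,2) by simp_all
  then have y: "y = (l, Suc m, e)" and m: "1 \<le> m" "Suc (Suc m) \<le> i"
    unfolding l_def m_def e_def by simp_all
  have "vclosure_is_knot i ((l, m, e) # W @ T)"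
    using snoc.prems(3) vclosure_is_knot_rotate[OF m, of "W @ T" l e] y by simp
  moreover from this have "vclosure_code i ((l, m, e) # W @ T) = vclosure_code i (W @ T @ [y])"
    using vclosure_code_rotate[OF m] y by simp
  moreover have "on_strands i (((l, m, e) # W) @ T)" using snoc.prems(1) m by simp
  ultimately have "vclosure_code i (map lower T @ (l, m, e) # W) = vclosure_code i (W @ T @ [y]) \<and>
    vclosure_is_knot i (map lower T @ (l, m, e) # W)"
    using snoc.IH[of "(l, m, e) # W"] snoc.prems(2) by simp
  moreover have "map lower (T @ [y]) @ W = map lower T @ (l, m, e) # W" by (simp add: lower_def y)
  ultimately show ?case by simp
qed simp

lemma vcycle_eq_top: "p \<in> {1..i} \<Longrightarrow> vcycle i p = i \<longleftrightarrow> p = 1"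
  by (auto simp: vcycle_def)

lemma return_map_drop_strand:
  "exit_pos W p \<noteq> 1 \<Longrightarrow> return_map (Suc n) W p = return_map n W p"
  by (simp add: return_map_def vcycle_def)

lemma return_map_funpow_drop_strand:
  assumes "1 \<le> n" "on_strands n W" "vclosure_is_knot (Suc n) W" "t < n"
  shows "(return_map (Suc n) W ^^ Suc t) (Suc n) = (return_map n W ^^ t) n"
  using assms(4)
proof (induction t)
  case 0
  have "exit_pos W (Suc n) = Suc n" using exit_pos_above[OF assms(2)] by simp
  then show ?case using assms(1) by (simp add: return_map_def vcycle_def)
next
  case (Suc t)
  let ?R = "return_map (Suc n) W" and ?S = "return_map n W"
  have "exit_pos W ((?S ^^ t) n) \<noteq> 1"
  proof
    assume exit: "exit_pos W ((?S ^^ t) n) = 1"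
    have "(?R ^^ Suc (Suc t)) (Suc n) = ?R ((?S ^^ t) n)" using Suc by simp
    also have "\<dots> = (?R ^^ 0) (Suc n)" using exit by (simp add: return_map_def vcycle_def)
    finally have eq: "(?R ^^ Suc (Suc t)) (Suc n) = (?R ^^ 0) (Suc n)" .
    have "inj_on (\<lambda>t. (?R ^^ t) (Suc n)) {0..<Suc n}"
      using assms(3) by (simp add: vclosure_is_knot_def strand_orbit_def distinct_map del: upt_Suc)
    from inj_onD[OF this eq] show False using Suc.prems by simp
  qed
  then show ?case using Suc return_map_drop_strand by simp
qed

lemma strand_orbit_drop_strand:
  assumes "1 \<le> n" "on_strands n W" "vclosure_is_knot (Suc n) W"
  shows "strand_orbit (Suc n) W = Suc n # strand_orbit n W" "(return_map n W ^^ n) n = n"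
proof -
  define r where "r t = (return_map (Suc n) W ^^ t) (Suc n)" for t
  define s where "s t = (return_map n W ^^ t) n" for t
  have r_s: "r (Suc t) = s t" if "t < n" for t
    using return_map_funpow_drop_strand[OF assms that] by (simp add: r_def s_def)
  then have "map r [0..<Suc n] = Suc n # map s [0..<n]"
    by (simp add: map_upt_Suc r_def del: upt_Suc)
  then show "strand_orbit (Suc n) W = Suc n # strand_orbit n W"
    unfolding strand_orbit_def r_def[abs_def] s_def[abs_def] .
  obtain n' where n': "n = Suc n'" using assms(1) by (cases n) auto
  have "s n' \<in> {1..Suc n}" using return_map_funpow_in_range[OF assms(2,1), of n'] by (simp add: s_def le_SucI)
  then have "exit_pos W (s n') \<in> {1..Suc n}"
    using exit_pos_in_range[OF on_strands_mono[OF assms(2) le_SucI[OF order_refl]]] by blast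
  moreover have "return_map (Suc n) W (s n') = Suc n"
    using assms(3) r_s[of n'] n' by (simp add: vclosure_is_knot_def r_def)
  ultimately have "exit_pos W (s n') = 1" using vcycle_eq_top by (simp add: return_map_def)
  then show "(return_map n W ^^ n) n = n" using n' by (simp add: s_def return_map_def vcycle_def)
qed

lemma vclosure_drop_strand:
  assumes "1 \<le> n" "on_strands n W" "vclosure_is_knot (Suc n) W"
  shows "vclosure_code n W = vclosure_code (Suc n) W" "vclosure_is_knot n W"
proof -
  have "strand_code W (Suc n) = []" using strand_code_above[OF assms(2)] by simp
  then show "vclosure_code n W = vclosure_code (Suc n) W"
    using strand_orbit_drop_strand[OF assms] by (simp add: vclosure_code_def)
  show "vclosure_is_knot n W"
    using strand_orbit_drop_strand[OF assms] assms(3) by (simp add: vclosure_is_knot_def)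
qed

lemma exit_pos_rev_upt: "map idx T = rev [p..<i] \<Longrightarrow> p \<le> i \<Longrightarrow> exit_pos T i = p"
proof (induction T arbitrary: i)
  case Nil
  then show ?case by auto
next
  case (Cons t T)
  have "p < i" using Cons.prems(1) by (cases "p < i") auto
  then obtain i' where i: "i = Suc i'" "p \<le> i'" by (cases i) auto
  then have "idx t = i'" "map idx T = rev [p..<i']" using Cons.prems(1) by simp_all
  then show ?case using Cons.IH i by (simp add: sw_def)
qed

lemma vclosure_code_Nil [simp]: "vclosure_code i [] = []"
proof -
  have "strand_code [] = (\<lambda>_. [])" by (rule ext) simp
  then show ?thesis by (simp add: vclosure_code_def)
qed

lemma descending_first_strand:
  assumes "knot_word i W" "1 \<le> i" "descending b {} (vclosure_code i W)"
  shows "\<forall>c\<in>set (strand_code W i). is_over c = b"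
proof -
  have "strand_orbit i W = i # map (\<lambda>t. (return_map i W ^^ t) i) [1..<i]"
    using assms(2) by (simp add: strand_orbit_def upt_conv_Cons)
  then have "vclosure_code i W = strand_code W i @ concat (map (strand_code W) (tl (strand_orbit i W)))"
    by (simp add: vclosure_code_def)
  then show ?thesis
    using descending_distinct_prefix[of b "{}" "strand_code W i"] assms(1,3) distinct_labels_strand_code
    by (simp add: knot_word_def)
qed

lemma staircase_suffix_start:
  assumes "knot_word (Suc n) (W @ T)" "on_strands n W" "staircase b (Suc n) p T" "p \<le> Suc n" "1 \<le> n"
  shows "p \<noteq> 1"
proof
  assume "p = 1"
  moreover have "exit_pos (W @ T) (Suc n) = p"
    using exit_pos_above[OF assms(2)] exit_pos_rev_upt assms(3,4) by (simp add: staircase_def)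
  ultimately have eq: "(return_map (Suc n) (W @ T) ^^ 1) (Suc n) = (return_map (Suc n) (W @ T) ^^ 0) (Suc n)"
    by (simp add: return_map_def vcycle_def)
  have "inj_on (\<lambda>t. (return_map (Suc n) (W @ T) ^^ t) (Suc n)) {0..<Suc n}"
    using assms(1) by (simp add: knot_word_def vclosure_is_knot_def strand_orbit_def distinct_map del: upt_Suc)
  from inj_onD[OF this eq] show False using assms(5) by simp
qed

lemma vclosure_drop_staircase:
  assumes "knot_word (Suc n) (W @ T)" "on_strands n W" "staircase b (Suc n) p T" "p \<in> {1..Suc n}" "1 \<le> n"
  shows "knot_word n (map lower T @ W) \<and> vclosure_code n (map lower T @ W) = vclosure_code (Suc n) (W @ T)"
proof -
  have "p \<noteq> 1" using staircase_suffix_start assms by simp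
  then have T: "2 \<le> idx x" "idx x < Suc n" if "x \<in> set T" for x
    using staircase_idx[OF assms(3) that] assms(4) by auto
  have rotate: "vclosure_code (Suc n) (map lower T @ W) = vclosure_code (Suc n) (W @ T)"
    "vclosure_is_knot (Suc n) (map lower T @ W)"
    using vclosure_rotate_word[of "Suc n" W T] assms(1) T by (auto simp: knot_word_def)
  have "1 \<le> idx (lower x) \<and> idx (lower x) < n" if "x \<in> set T" for x
    using T[OF that] unfolding lower_def by (simp only: fst_conv snd_conv) linarith
  then have "on_strands n (map lower T @ W)" using assms(2) by (auto simp: on_strands_def)
  moreover have "distinct (map fst (map lower T @ W))"
    using assms(1) by (auto simp: lower_def knot_word_def comp_def)
  ultimately show ?thesis
    using vclosure_drop_strand[OF assms(5) _ rotate(2)] rotate(1) by (simp add: knot_word_def)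
qed

lemma descending_vclosure_reduce:
  assumes "knot_word (Suc n) W" "1 \<le> n" "descending b {} (vclosure_code (Suc n) W)"
  obtains W1 where "knot_word n W1" "vequiv (vclosure_code (Suc n) W) (vclosure_code n W1)"
    "descending b {} (vclosure_code n W1)"
proof -
  have "staircase b (Suc n) (Suc n) []" by (simp add: staircase_def)
  moreover have "on_strands (Suc n) W" using assms(1) by (simp add: knot_word_def)
  ultimately obtain W' T p where moves: "(word_move b)\<^sup>*\<^sup>* W (W' @ T)"
    and T: "staircase b (Suc n) p T" "on_strands n W'" "p \<in> {1..Suc n}"
    using gather_strand[OF descending_first_strand[OF assms(1) _ assms(3)]] by fastforce
  have "knot_word (Suc n) (W' @ T)" "vequiv (vclosure_code (Suc n) W) (vclosure_code (Suc n) (W' @ T))"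
    "descending b {} (vclosure_code (Suc n) (W' @ T))"
    using word_moves_vclosure[OF moves assms(1), of b] assms(3) by simp_all
  then show ?thesis
    using that[of "map lower T @ W'"] vclosure_drop_staircase[OF _ T(2,1,3) assms(2)] by simp
qed

theorem descending_vclosure_unknot:
  "knot_word i W \<Longrightarrow> descending b {} (vclosure_code i W) \<Longrightarrow> vequiv (vclosure_code i W) []"
proof (induction i arbitrary: W)
  case 0
  then have "W = []" by (cases W) (auto simp: knot_word_def)
  then show ?case by simp
next
  case (Suc n)
  show ?case
  proof (cases "n = 0")
    case True
    then have "W = []" using Suc.prems(1) by (cases W) (auto simp: knot_word_def)
    then show ?thesis by simp
  next
    case False
    then obtain W1 where "knot_word n W1" "vequiv (vclosure_code (Suc n) W) (vclosure_code n W1)"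
      "descending b {} (vclosure_code n W1)"
      using descending_vclosure_reduce[OF Suc.prems(1) _ Suc.prems(2)] by auto
    then show ?thesis using Suc.IH vequiv_trans by blast
  qed
qed

(* Labels start at n since trav numbers all letters consecutively and the virtual ones come first. *)
fun classical_word :: "nat \<Rightarrow> nat list \<Rightarrow> cletter list" where
  "classical_word n [] = []"
| "classical_word n (m # ms) = (n, m, True) # classical_word (Suc n) ms"

lemma trav_Virt: "trav n (map Virt vs @ w) p = trav (n + length vs) w (fold sw vs p)"
  by (induction vs arbitrary: n p) auto

lemma trav_Cl: "trav n (map Cl ms) p = (strand_code (classical_word n ms) p, exit_pos (classical_word n ms) p)"
  by (induction ms arbitrary: n p) (auto simp: Let_def split: prod.splits)

lemma fold_sw_upt:
  "1 \<le> p \<Longrightarrow> fold sw [1..<Suc n] p = (if p = 1 then Suc n else if p \<le> Suc n then p - 1 else p)"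
proof (induction n)
  case (Suc n)
  define v where "v = fold sw [1..<Suc n] p"
  have IH: "v = (if p = 1 then Suc n else if p \<le> Suc n then p - 1 else p)"
    using Suc unfolding v_def by blast
  have "[1..<Suc (Suc n)] = [1..<Suc n] @ [Suc n]" by simp
  then have step: "fold sw [1..<Suc (Suc n)] p = sw (Suc n) v"
    unfolding v_def by (simp only: fold_append comp_def fold_Cons fold_Nil id_def)
  show ?case unfolding step IH using Suc.prems by (auto simp: sw_def)
qed simp

lemma fold_sw_vcycle: "p \<in> {1..i} \<Longrightarrow> fold sw [1..<i] p = vcycle i p"
  using fold_sw_upt[of p "i - 1"] by (cases i) (auto simp: vcycle_def)

lemma on_strands_classical_word: "\<forall>m\<in>set ms. 1 \<le> m \<and> m < i \<Longrightarrow> on_strands i (classical_word n ms)"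
  by (induction ms arbitrary: n) auto

lemma labels_classical_word: "map fst (classical_word n ms) = [n..<n + length ms]"
  by (induction ms arbitrary: n) (simp_all add: upt_conv_Cons del: upt_Suc)

lemma length_classical_word: "length (classical_word n ms) = length ms"
  by (induction ms arbitrary: n) auto

lemma distinct_funpow_if_covers:
  fixes f :: "'a \<Rightarrow> 'a"
  assumes "A \<subseteq> range (\<lambda>t. (f ^^ t) x)" "n \<le> card A"
  shows "distinct (map (\<lambda>t. (f ^^ t) x) [0..<n])"
proof (rule ccontr)
  define xs where "xs t = (f ^^ t) x" for t
  assume "\<not> ?thesis"
  then obtain a b where ab: "a < b" "b < n" "xs a = xs b"
    by (auto simp: distinct_conv_nth xs_def) (metis linorder_neqE_nat)
  have xs_add: "xs (t + s) = (f ^^ t) (xs s)" for t s by (simp add: xs_def funpow_add)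
  have "xs t \<in> xs ` {0..<b}" for t
  proof (induction t rule: less_induct)
    case (less t)
    show ?case
    proof (cases "t < b")
      case False
      then have "xs t = xs ((t - b) + a)" using xs_add[of "t - b" b] xs_add[of "t - b" a] ab(3) by simp
      moreover have "(t - b) + a < t" using False ab(1) by simp
      ultimately show ?thesis using less.IH by metis
    qed simp
  qed
  then have "A \<subseteq> xs ` {0..<b}" using assms(1) by (auto simp: xs_def)
  then have "card A \<le> card (xs ` {0..<b})" by (simp add: card_mono)
  also have "\<dots> \<le> b" using card_image_le[of "{0..<b}" xs] by simp
  finally show False using assms(2) ab(2) by simp
qed

lemma funpow_card_return:
  assumes "\<forall>y\<in>A. f y \<in> A" "inj_on f A" "x \<in> A" "finite A" "card A = n"
    and "distinct (map (\<lambda>t. (f ^^ t) x) [0..<n])"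
  shows "(f ^^ n) x = x"
proof -
  define xs where "xs t = (f ^^ t) x" for t
  have xs_in: "xs t \<in> A" for t by (induction t) (use assms(1,3) in \<open>auto simp: xs_def\<close>)
  have dist: "inj_on xs {0..<n}" using assms(6) unfolding xs_def[abs_def] by (simp add: distinct_map)
  have "set (map xs [0..<n]) \<subseteq> A" using xs_in by auto
  moreover have "card (set (map xs [0..<n])) = n" using assms(6) distinct_card by (fastforce simp: xs_def)
  ultimately have "set (map xs [0..<n]) = A" using assms(4,5) by (simp add: card_subset_eq)
  then obtain a where a: "a < n" "xs n = xs a" using xs_in[of n] by auto
  show ?thesis
  proof (cases a)
    case 0
    then show ?thesis using a by (simp add: xs_def)
  next
    case (Suc a')
    obtain n' where n': "n = Suc n'" using a by (cases n) auto
    have "f (xs n') = f (xs a')" using a Suc n' by (simp add: xs_def)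
    then have "xs n' = xs a'" using assms(2) xs_in by (meson inj_onD)
    then have "n' = a'" using inj_onD[OF dist] a Suc n' by simp
    then show ?thesis using a Suc n' by simp
  qed
qed

context
  fixes i :: nat and ms :: "nat list"
  assumes ms: "\<forall>m\<in>set ms. 1 \<le> m \<and> m < i"
begin

lemma trav_vcycle_braid:
  "p \<in> {1..i} \<Longrightarrow> trav 0 (map Virt [1..<i] @ map Cl ms) p =
    (strand_code (classical_word (i - 1) ms) (vcycle i p), exit_pos (classical_word (i - 1) ms) (vcycle i p))"
  using fold_sw_vcycle[of p i] by (simp add: trav_Virt trav_Cl)

lemma bperm_vcycle_braid:
  "p \<in> {1..i} \<Longrightarrow> bperm (map Virt [1..<i] @ map Cl ms) p = exit_pos (classical_word (i - 1) ms) (vcycle i p)"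
  using trav_vcycle_braid[of p] by (simp add: bperm_def)

lemma bperm_vcycle_braid_funpow:
  assumes "1 \<le> i"
  shows "(bperm (map Virt [1..<i] @ map Cl ms) ^^ t) 1 \<in> {1..i} \<and>
    vcycle i ((bperm (map Virt [1..<i] @ map Cl ms) ^^ t) 1) = (return_map i (classical_word (i - 1) ms) ^^ t) i"
proof (induction t)
  case 0
  then show ?case using assms by (simp add: vcycle_def)
next
  case (Suc t)
  let ?W = "classical_word (i - 1) ms" and ?x = "(bperm (map Virt [1..<i] @ map Cl ms) ^^ t) 1"
  have x: "?x \<in> {1..i}" using Suc by simp
  have "bperm (map Virt [1..<i] @ map Cl ms) ?x = exit_pos ?W (vcycle i ?x)"
    using bperm_vcycle_braid[OF x] .
  moreover have "exit_pos ?W (vcycle i ?x) \<in> {1..i}"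
    using exit_pos_in_range[OF on_strands_classical_word[OF ms] vcycle_in_range] Suc by blast
  ultimately show ?case using Suc by (simp add: return_map_def)
qed

lemma closure_code_vcycle_braid:
  assumes "1 \<le> i"
  shows "closure_code i (map Virt [1..<i] @ map Cl ms) = vclosure_code i (classical_word (i - 1) ms)"
proof -
  have "fst (trav 0 (map Virt [1..<i] @ map Cl ms) ((bperm (map Virt [1..<i] @ map Cl ms) ^^ t) 1)) =
      strand_code (classical_word (i - 1) ms) ((return_map i (classical_word (i - 1) ms) ^^ t) i)" for t
    using trav_vcycle_braid bperm_vcycle_braid_funpow[OF assms, of t] by simp
  then show ?thesis by (simp add: closure_code_def vclosure_code_def strand_orbit_def comp_def)
qed

lemma vclosure_is_knot_vcycle_braid:
  assumes "1 \<le> i" "closure_is_knot i (map Virt [1..<i] @ map Cl ms)"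
  shows "vclosure_is_knot i (classical_word (i - 1) ms)"
proof -
  let ?W = "classical_word (i - 1) ms"
  have W: "on_strands i ?W" using ms by (rule on_strands_classical_word)
  have "\<forall>p\<in>{1..i}. return_map i ?W p \<in> {1..i}" using return_map_in_range[OF W] by blast
  moreover have "inj_on (return_map i ?W) {1..i}"
  proof (rule inj_onI)
    fix p q assume "p \<in> {1..i}" "q \<in> {1..i}" "return_map i ?W p = return_map i ?W q"
    then have "exit_pos ?W p = exit_pos ?W q"
      using vcycle_eq_iff exit_pos_in_range[OF W] by (simp add: return_map_def)
    then show "p = q" by (simp add: exit_pos_eq_iff)
  qed
  moreover have "{1..i} \<subseteq> range (\<lambda>t. (return_map i ?W ^^ t) i)"
  proof
    fix y assume y: "y \<in> {1..i}"
    define p where "p = (if y = i then 1 else Suc y)"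
    have p: "p \<in> {1..i}" "vcycle i p = y" using y by (auto simp: p_def vcycle_def)
    then obtain t where "(bperm (map Virt [1..<i] @ map Cl ms) ^^ t) 1 = p"
      using assms(2) p(1) unfolding closure_is_knot_def by blast
    then show "y \<in> range (\<lambda>t. (return_map i ?W ^^ t) i)"
      using bperm_vcycle_braid_funpow[OF assms(1), of t] p by (metis rangeI)
  qed
  then have "distinct (map (\<lambda>t. (return_map i ?W ^^ t) i) [0..<i])"
    by (rule distinct_funpow_if_covers) simp
  ultimately show ?thesis using funpow_card_return[of "{1..i}" "return_map i ?W" i i] assms(1)
    by (simp add: vclosure_is_knot_def strand_orbit_def)
qed

end

definition flip_entry :: "nat set \<Rightarrow> entry \<Rightarrow> entry" where
  "flip_entry F e = (if fst e \<in> F then (fst e, \<not> is_over e, \<not> snd (snd e)) else e)"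

definition flip_signs :: "nat set \<Rightarrow> cletter list \<Rightarrow> cletter list" where
  "flip_signs F W = map (\<lambda>x. if fst x \<in> F then (fst x, idx x, \<not> snd (snd x)) else x) W"

lemma exit_pos_flip_signs: "exit_pos (flip_signs F W) = exit_pos W"
proof
  show "exit_pos (flip_signs F W) p = exit_pos W p" for p
    by (induction W arbitrary: p) (simp_all add: flip_signs_def)
qed

lemma strand_code_flip_signs: "strand_code (flip_signs F W) p = map (flip_entry F) (strand_code W p)"
proof (induction W arbitrary: p)
  case (Cons x W)
  then show ?case by (cases x) (auto simp: flip_signs_def flip_entry_def)
qed (simp add: flip_signs_def)

lemma vclosure_code_flip_signs: "vclosure_code i (flip_signs F W) = map (flip_entry F) (vclosure_code i W)"
proof -
  have "strand_code (flip_signs F W) = (\<lambda>p. map (flip_entry F) (strand_code W p))"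
    by (rule ext) (rule strand_code_flip_signs)
  then show ?thesis
    using strand_orbit_cong[OF exit_pos_flip_signs[of F W]] by (simp add: vclosure_code_def map_concat comp_def)
qed

lemma knot_word_flip_signs: "knot_word i (flip_signs F W) \<longleftrightarrow> knot_word i W"
proof -
  have "on_strands i (flip_signs F W) = on_strands i W" "map fst (flip_signs F W) = map fst W"
    by (induction W) (simp_all add: flip_signs_def)
  then show ?thesis using vclosure_is_knot_cong[OF exit_pos_flip_signs] by (simp add: knot_word_def)
qed

lemma crossing_change_flip_entry: "crossing_change c w = map (flip_entry {c}) w"
  by (auto simp: crossing_change_def flip_entry_def)

lemma fst_flip_entry [simp]: "fst (flip_entry F e) = fst e"
  by (simp add: flip_entry_def)

lemma labels_flip_entry [simp]: "labels (map (flip_entry F) w) = labels w"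
  by (simp add: labels_def image_image)

lemma unknot_with_flip:
  assumes "finite F" "F \<subseteq> labels w" "vequiv (map (flip_entry F) w) []"
  shows "unknot_with w (card F)"
  using assms
proof (induction F arbitrary: w rule: finite_induct)
  case empty
  have "flip_entry {} = id" by (simp add: fun_eq_iff flip_entry_def)
  then show ?case using empty unknot_with.move[OF _ unknot_with.base] by simp
next
  case (insert c F)
  have "map (flip_entry F) (crossing_change c w) = map (flip_entry (insert c F)) w"
    using insert.hyps(2) by (auto simp: crossing_change_flip_entry flip_entry_def)
  then have "vequiv (map (flip_entry F) (crossing_change c w)) []" using insert.prems(2) by simp
  moreover have "F \<subseteq> labels (crossing_change c w)" using insert.prems(1) by (simp add: crossing_change_flip_entry)
  ultimately have "unknot_with (crossing_change c w) (card F)" using insert.IH by blast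
  then show ?case using unknot_with.cc[of c w] insert.prems(1) insert.hyps by simp
qed

fun bad_crossings :: "bool \<Rightarrow> nat set \<Rightarrow> gcode \<Rightarrow> nat set" where
  "bad_crossings b S [] = {}"
| "bad_crossings b S (e # w) =
    (if fst e \<notin> S \<and> is_over e \<noteq> b then {fst e} else {}) \<union> bad_crossings b (insert (fst e) S) w"

lemma bad_crossings_disjoint_seen: "bad_crossings b S w \<inter> S = {}"
  by (induction w arbitrary: S) auto

lemma bad_crossings_subset_labels: "bad_crossings b S w \<subseteq> labels w"
  by (induction w arbitrary: S) (auto simp: labels_def)

lemma bad_crossings_disjoint: "bad_crossings True S w \<inter> bad_crossings False S w = {}"
proof (induction w arbitrary: S)
  case (Cons e w)
  have "fst e \<notin> bad_crossings c (insert (fst e) S) w" for c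
    using bad_crossings_disjoint_seen by blast
  then show ?case using Cons[of "insert (fst e) S"] by auto
qed simp

lemma descending_flip_bad_crossings:
  "\<forall>c. c \<notin> S \<longrightarrow> c \<in> fst ` set w \<longrightarrow> (c \<in> F \<longleftrightarrow> c \<in> bad_crossings b S w) \<Longrightarrow>
   descending b S (map (flip_entry F) w)"
proof (induction w arbitrary: S)
  case (Cons e w)
  have "fst e \<notin> bad_crossings b (insert (fst e) S) w" using bad_crossings_disjoint_seen by blast
  then have "fst e \<notin> S \<longrightarrow> is_over (flip_entry F e) = b"
    using Cons.prems by (auto simp: flip_entry_def)
  moreover have "descending b (insert (fst e) S) (map (flip_entry F) w)"
    by (rule Cons.IH) (use Cons.prems in auto)
  ultimately show ?case by simp
qed simp

lemma unknot_with_bad_crossings: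
  assumes "knot_word i W"
  shows "unknot_with (vclosure_code i W) (card (bad_crossings b {} (vclosure_code i W)))"
proof -
  let ?w = "vclosure_code i W"
  let ?F = "bad_crossings b {} ?w"
  have "finite (labels ?w)" by (simp add: labels_def)
  then have F: "finite ?F" "?F \<subseteq> labels ?w"
    using finite_subset[OF bad_crossings_subset_labels] bad_crossings_subset_labels by blast+
  have "knot_word i (flip_signs ?F W)" using assms by (simp add: knot_word_flip_signs)
  moreover have "descending b {} (vclosure_code i (flip_signs ?F W))"
    unfolding vclosure_code_flip_signs by (rule descending_flip_bad_crossings) simp
  ultimately have "vequiv (vclosure_code i (flip_signs ?F W)) []" by (rule descending_vclosure_unknot)
  then have "vequiv (map (flip_entry ?F) ?w) []" by (simp only: vclosure_code_flip_signs)
  then show ?thesis using unknot_with_flip F by blast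
qed

theorem vu_vclosure_code:
  assumes "knot_word i W"
  shows "null_homotopic (vclosure_code i W)" "2 * vu (vclosure_code i W) \<le> length W"
proof -
  let ?w = "vclosure_code i W"
  have vu_le: "vu ?w \<le> card (bad_crossings b {} ?w)" for b
    unfolding vu_def by (rule Least_le) (rule unknot_with_bad_crossings[OF assms])
  have fin: "finite (labels ?w)" by (simp add: labels_def)
  have bad: "bad_crossings b {} ?w \<subseteq> labels ?w" for b by (rule bad_crossings_subset_labels)
  have "card (bad_crossings True {} ?w) + card (bad_crossings False {} ?w) =
      card (bad_crossings True {} ?w \<union> bad_crossings False {} ?w)"
    by (rule card_Un_disjoint[OF finite_subset[OF bad fin] finite_subset[OF bad fin] bad_crossings_disjoint, symmetric])
  also have "\<dots> \<le> card (labels ?w)" using bad by (intro card_mono[OF fin]) blast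
  also have "\<dots> \<le> card (fst ` set W)" using labels_vclosure_code by (intro card_mono) simp_all
  also have "\<dots> \<le> length W" using card_image_le[of "set W" fst] card_length[of W] by simp
  finally show "2 * vu ?w \<le> length W" using vu_le[of True] vu_le[of False] by linarith
  show "null_homotopic ?w" using unknot_with_bad_crossings[OF assms] by (auto simp: null_homotopic_def)
qed

definition ijk_indices :: "nat \<Rightarrow> nat \<Rightarrow> nat \<Rightarrow> nat list" where
  "ijk_indices i j k = concat (replicate (j - 1) [1..<i]) @ rev [1..<k + 1]"

lemma ijk_braid_eq: "ijk_braid i j k = map Virt [1..<i] @ map Cl (ijk_indices i j k)"
  by (simp add: ijk_braid_def VB1_def Bk_def ijk_indices_def map_concat)

lemma length_ijk_indices: "length (ijk_indices i j k) = (j - 1) * (i - 1) + k"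
  by (simp add: ijk_indices_def length_concat sum_list_replicate)

lemma ijk_indices_range: "k < i \<Longrightarrow> \<forall>m\<in>set (ijk_indices i j k). 1 \<le> m \<and> m < i"
  by (auto simp: ijk_indices_def)

theorem proposition3p13:
  fixes i j k :: nat
  assumes "j > 0" and "k < i"
    and "closure_is_knot i (ijk_braid i j k)"
  shows "null_homotopic (closure_code i (ijk_braid i j k)) \<and>
         2 * int (vu (closure_code i (ijk_braid i j k)))
           \<le> (int i - 1) * (int j - 1) + int k"
proof -
  define W where "W = classical_word (i - 1) (ijk_indices i j k)"
  have ms: "\<forall>m\<in>set (ijk_indices i j k). 1 \<le> m \<and> m < i" using assms(2) by (rule ijk_indices_range)
  have i: "1 \<le> i" using assms(2) by simp
  have code: "closure_code i (ijk_braid i j k) = vclosure_code i W"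
    unfolding ijk_braid_eq W_def by (rule closure_code_vcycle_braid[OF ms i])
  have "knot_word i W"
    using on_strands_classical_word[OF ms] vclosure_is_knot_vcycle_braid[OF ms i] assms(3)
    by (simp add: knot_word_def W_def labels_classical_word ijk_braid_eq)
  then have "null_homotopic (vclosure_code i W)" "2 * vu (vclosure_code i W) \<le> length W"
    by (rule vu_vclosure_code)+
  moreover have "length W = (j - 1) * (i - 1) + k"
    by (simp add: W_def length_classical_word length_ijk_indices)
  moreover have "int ((j - 1) * (i - 1) + k) = (int i - 1) * (int j - 1) + int k"
    using assms(1,2) by (simp add: of_nat_diff)
  ultimately show ?thesis unfolding code by linarith
qed

end
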